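(* In any execution of $\mathtt{search}(\mathcal{G},T)$ (defined in the context), let $\mathcal{G}'$ be the current subgame with top priority $p$, $\alpha\equiv p\pmod 2$, and let $(Z,\sigma)=\mathit{TAttr}^{\mathcal{G}',T'}_\alpha(\mathrm{pr}^{-1}(p)\cap V')$ be the computed region and strategy. Then every play in $\mathcal{G}'$ that is consistent with $\sigma$ and stays in $Z$ forever is won by player $\alpha$.
   Context: Parity games: $\mathcal{G}=(V_0,V_1,E,\mathrm{pr})$, $V=V_0\cup V_1$ finite, partitioned into vertices of Even ($0$) and Odd ($1$); $E\subseteq V\times V$ with every vertex having a successor; $\mathrm{pr}:V\to\{0,\dots,d\}$. $E(u)=\{v:(u,v)\in E\}$, $\mathrm{pr}(U)=\max_{u\in U}\mathrm{pr}(u)$, $\mathrm{pr}^{-1}(p)$ the set of vertices of priority $p$, $\overline{\alpha}=1-\alpha$. A play (infinite path) is won by Even iff the highest priority occurring infinitely often is even; a cycle is won by $\alpha$ if its highest priority has parity $\alpha$. A strategy of $\alpha$ is a partial function $\sigma$ on $V_\alpha$ with $\sigma(v)\in E(v)$; a play is consistent with $\sigma$ if every vertex $v\in\mathrm{dom}(\sigma)$ on it is followed by $\sigma(v)$. For $U\subseteq V$, $\mathcal{G}\cap U$ is the subgame with vertices $V\cap U$ and edges $E\cap(U\times U)$, and $\mathcal{G}\setminus U=\mathcal{G}\cap(V\setminus U)$. A $p$-tangle is a nonempty $U\subseteq V$ with $p=\mathrm{pr}(U)$ such that for $\alpha\equiv p\pmod 2$ there is a strategy $\sigma:U\cap V_\alpha\to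 U$ (witness strategy $\sigma_T(U)$) with $(U,E\cap(\sigma\cup((U\cap V_{\overline{\alpha}})\times U)))$ strongly connected and all its cycles won by $\alpha$ ("won by $\alpha$"). For a tangle $t$ won by $\alpha$ in a game with edge set $E$, $E_T(t)=\{v\notin t:\exists u\in t\cap V_{\overline{\alpha}},(u,v)\in E\}$. $T_\alpha$ denotes the tangles of $T$ won by $\alpha$; for a subgame $\mathcal{G}'$, $T\cap\mathcal{G}'$ denotes the tangles of $T$ contained in its vertex set. Tangle attractor: for a game $\mathcal{G}$ with vertices $V$, tangles $T$, player $\alpha$ and $A\subseteq V$, $\mathit{TAttr}^{\mathcal{G},T}_\alpha(A)$ is the least $Z\supseteq A$ containing every $v\in V_\alpha$ with $E(v)\cap Z\neq\emptyset$, every $v\in V_{\overline{\alpha}}$ with $E(v)\subseteq Z$, and every vertex of every $t\in T_\alpha$ with $\emptyset\neq E_T(t)\subseteq Z$ ($E_T$ computed in $\mathcal{G}$). It is computed iteratively together with a strategy $\sigma$ of $\alpha$ (initially empty): when an $\alpha$-vertex is added individually, $\sigma$ maps it to a successor already in $Z$; each $\alpha$-vertex of $A$ gets as $\sigma$-value a successor in $Z$ once one exists; when the vertices of a tangle $t$ are added, $\sigma(u):=\sigma_T(t)(u)$ for every $\alpha$-vertex $u\in t$ not yet in $\mathrm{dom}(\sigma)$. extract-tangles$(Z,\sigma)$, for a subgame $\mathcal{G}'=(V',E')$ with top priority $p$, $\alpha\equiv p$, region $Z\subseteq V'$ and strategy $\sigma$: let $Y$ be the greatest $X\subseteq Z$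 such that every $v\in X\cap V_{\overline{\alpha}}$ has $E'(v)\subseteq X$ and every $v\in X\cap V_\alpha$ has $\sigma(v)\in X$; let $H$ be the graph on $Y$ with edges $(v,\sigma(v))$ for $v\in Y\cap V_\alpha$ and $(v,w)\in E'$ for $v\in Y\cap V_{\overline{\alpha}}$; return all bottom strongly connected components of $H$ that contain at least one edge of $H$, each with witness strategy $\sigma$ restricted to it. $\mathtt{search}(\mathcal{G},T)$ (with $T$ a set of tangles of $\mathcal{G}$): repeat forever: set $r:=\emptyset$ (a partial function $V\to\mathbb{N}$, the region function) and $Y:=\emptyset$; while $V\setminus\mathrm{dom}(r)\neq\emptyset$: let $\mathcal{G}':=\mathcal{G}\setminus\mathrm{dom}(r)$ with vertex set $V'$, $T':=T\cap\mathcal{G}'$, $p:=\mathrm{pr}(\mathcal{G}')$, $\alpha:=p\bmod 2$; compute $(Z,\sigma):=\mathit{TAttr}^{\mathcal{G}',T'}_\alpha(\mathrm{pr}^{-1}(p)\cap V')$ (the region of priority $p$); let $A:=$ extract-tangles$(Z,\sigma)$; if some $t\in A$ has $E_T(t)=\emptyset$ with $E_T$ computed in the full game $\mathcal{G}$, return $(T\cup Y,t)$; otherwise set $r(v):=p$ for all $v\in Z$ and $Y:=Y\cup A$. After the while-loop, set $T:=T\cup Y$. *)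

theory Defs
  imports Main
begin

text \<open>A parity game over vertex type 'v. Players are encoded as naturals: 0 = Even, 1 = Odd.\<close>

record 'v game =
  V0 :: "'v set"
  V1 :: "'v set"
  E  :: "('v \<times> 'v) set"
  pr :: "'v \<Rightarrow> nat"

definition verts :: "('v, 'a) game_scheme \<Rightarrow> 'v set" where
  "verts G = V0 G \<union> V1 G"

definition Vp :: "('v, 'a) game_scheme \<Rightarrow> nat \<Rightarrow> 'v set" where
  "Vp G \<alpha> = (if \<alpha> = 0 then V0 G else V1 G)"

definition opp :: "nat \<Rightarrow> nat" where
  "opp \<alpha> = 1 - \<alpha>"

definition wf_game :: "'v game \<Rightarrow> bool" where
  "wf_game G \<longleftrightarrow> finite (verts G) \<and> V0 G \<inter> V1 G = {} \<and> E G \<subseteq> verts G \<times> verts G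
     \<and> (\<forall>v\<in>verts G. \<exists>w. (v, w) \<in> E G)"

definition subgame :: "'v game \<Rightarrow> 'v set \<Rightarrow> 'v game" where
  "subgame G U = \<lparr>V0 = V0 G \<inter> U, V1 = V1 G \<inter> U, E = E G \<inter> (U \<times> U), pr = pr G\<rparr>"

definition prmax :: "'v game \<Rightarrow> 'v set \<Rightarrow> nat" where
  "prmax G U = Max (pr G ` U)"

definition is_play :: "'v game \<Rightarrow> (nat \<Rightarrow> 'v) \<Rightarrow> bool" where
  "is_play G \<rho> \<longleftrightarrow> (\<forall>i. (\<rho> i, \<rho> (Suc i)) \<in> E G)"

definition consistent :: "('v \<rightharpoonup> 'v) \<Rightarrow> (nat \<Rightarrow> 'v) \<Rightarrow> bool" where
  "consistent \<sigma> \<rho> \<longleftrightarrow> (\<forall>i w. \<sigma> (\<rho> i) = Some w \<longrightarrow> \<rho> (Suc i) = w)"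

definition inf_prios :: "'v game \<Rightarrow> (nat \<Rightarrow> 'v) \<Rightarrow> nat set" where
  "inf_prios G \<rho> = {q. \<exists>\<^sub>\<infinity> i. pr G (\<rho> i) = q}"

definition play_won_by :: "'v game \<Rightarrow> nat \<Rightarrow> (nat \<Rightarrow> 'v) \<Rightarrow> bool" where
  "play_won_by G \<alpha> \<rho> \<longleftrightarrow> Max (inf_prios G \<rho>) mod 2 = \<alpha>"

text \<open>A tangle is represented together with its witness strategy.\<close>
type_synonym 'v tangle = "'v set \<times> ('v \<rightharpoonup> 'v)"

definition tangle_graph :: "'v game \<Rightarrow> 'v set \<Rightarrow> ('v \<rightharpoonup> 'v) \<Rightarrow> ('v \<times> 'v) set" where
  "tangle_graph G U \<sigma> =
     (let \<alpha> = prmax G U mod 2 in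
       {(u, w). u \<in> U \<inter> Vp G \<alpha> \<and> \<sigma> u = Some w}
       \<union> {(u, w). (u, w) \<in> E G \<and> u \<in> U \<inter> Vp G (opp \<alpha>) \<and> w \<in> U})"

definition is_cycle :: "('v \<times> 'v) set \<Rightarrow> 'v list \<Rightarrow> bool" where
  "is_cycle R xs \<longleftrightarrow> xs \<noteq> [] \<and>
     (\<forall>i < length xs. (xs ! i, xs ! (Suc i mod length xs)) \<in> R)"

definition is_tangle :: "'v game \<Rightarrow> 'v tangle \<Rightarrow> bool" where
  "is_tangle G t \<longleftrightarrow>
     (let U = fst t; \<sigma> = snd t; \<alpha> = prmax G U mod 2; R = tangle_graph G U \<sigma> in
       U \<noteq> {} \<and> U \<subseteq> verts G \<and>
       dom \<sigma> = U \<inter> Vp G \<alpha> \<and>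
       (\<forall>u \<in> U \<inter> Vp G \<alpha>. \<exists>w. \<sigma> u = Some w \<and> w \<in> U \<and> (u, w) \<in> E G) \<and>
       (\<forall>u\<in>U. \<forall>w\<in>U. (u, w) \<in> R\<^sup>*) \<and>
       (\<forall>xs. is_cycle R xs \<longrightarrow> Max (pr G ` set xs) mod 2 = \<alpha>))"

definition escapes :: "'v game \<Rightarrow> 'v tangle \<Rightarrow> 'v set" where
  "escapes G t = (let U = fst t; \<alpha> = prmax G U mod 2 in
     {v. v \<notin> U \<and> (\<exists>u \<in> U \<inter> Vp G (opp \<alpha>). (u, v) \<in> E G)})"

inductive tattr_step ::
  "'v game \<Rightarrow> 'v tangle set \<Rightarrow> nat \<Rightarrow> 'v set \<Rightarrow> ('v set \<times> ('v \<rightharpoonup> 'v)) \<Rightarrow> ('v set \<times> ('v \<rightharpoonup> 'v)) \<Rightarrow> bool"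
  for G T \<alpha> A where
  attr_own: "\<lbrakk>v \<in> Vp G \<alpha>; v \<notin> Z; w \<in> Z; (v, w) \<in> E G\<rbrakk>
     \<Longrightarrow> tattr_step G T \<alpha> A (Z, \<sigma>) (Z \<union> {v}, \<sigma>(v \<mapsto> w))"
| attr_opp: "\<lbrakk>v \<in> Vp G (opp \<alpha>); v \<notin> Z; {w. (v, w) \<in> E G} \<subseteq> Z\<rbrakk>
     \<Longrightarrow> tattr_step G T \<alpha> A (Z, \<sigma>) (Z \<union> {v}, \<sigma>)"
| attr_tangle: "\<lbrakk>(U, \<tau>) \<in> T; prmax G U mod 2 = \<alpha>; \<not> U \<subseteq> Z;
     escapes G (U, \<tau>) \<noteq> {}; escapes G (U, \<tau>) \<subseteq> Z\<rbrakk>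
     \<Longrightarrow> tattr_step G T \<alpha> A (Z, \<sigma>)
           (Z \<union> U, \<lambda>u. if u \<in> U \<inter> Vp G \<alpha> \<and> \<sigma> u = None then \<tau> u else \<sigma> u)"
| attr_target: "\<lbrakk>v \<in> A \<inter> Vp G \<alpha>; \<sigma> v = None; w \<in> Z; (v, w) \<in> E G\<rbrakk>
     \<Longrightarrow> tattr_step G T \<alpha> A (Z, \<sigma>) (Z, \<sigma>(v \<mapsto> w))"

definition tattr ::
  "'v game \<Rightarrow> 'v tangle set \<Rightarrow> nat \<Rightarrow> 'v set \<Rightarrow> ('v set \<times> ('v \<rightharpoonup> 'v)) \<Rightarrow> bool" where
  "tattr G T \<alpha> A s \<longleftrightarrow> (tattr_step G T \<alpha> A)\<^sup>*\<^sup>* (A, Map.empty) s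
     \<and> \<not> (\<exists>s'. tattr_step G T \<alpha> A s s')"

definition closed_in :: "'v game \<Rightarrow> nat \<Rightarrow> ('v \<rightharpoonup> 'v) \<Rightarrow> 'v set \<Rightarrow> bool" where
  "closed_in G \<alpha> \<sigma> X \<longleftrightarrow>
     (\<forall>v \<in> X \<inter> Vp G (opp \<alpha>). \<forall>w. (v, w) \<in> E G \<longrightarrow> w \<in> X) \<and>
     (\<forall>v \<in> X \<inter> Vp G \<alpha>. \<exists>w. \<sigma> v = Some w \<and> w \<in> X)"

text \<open>The greatest closed subset of Z (closed sets are closed under unions).\<close>
definition greatest_closed :: "'v game \<Rightarrow> nat \<Rightarrow> 'v set \<Rightarrow> ('v \<rightharpoonup> 'v) \<Rightarrow> 'v set" where
  "greatest_closed G \<alpha> Z \<sigma> = \<Union> {X. X \<subseteq> Z \<and> closed_in G \<alpha> \<sigma> X}"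

definition extract_graph :: "'v game \<Rightarrow> nat \<Rightarrow> 'v set \<Rightarrow> ('v \<rightharpoonup> 'v) \<Rightarrow> ('v \<times> 'v) set" where
  "extract_graph G \<alpha> Y \<sigma> =
     {(v, w). v \<in> Y \<inter> Vp G \<alpha> \<and> \<sigma> v = Some w}
     \<union> {(v, w). (v, w) \<in> E G \<and> v \<in> Y \<inter> Vp G (opp \<alpha>)}"

definition bottom_scc :: "('v \<times> 'v) set \<Rightarrow> 'v set \<Rightarrow> 'v set \<Rightarrow> bool" where
  "bottom_scc H Y C \<longleftrightarrow> C \<noteq> {} \<and> C \<subseteq> Y \<and>
     (\<forall>u\<in>C. \<forall>w\<in>C. (u, w) \<in> H\<^sup>*) \<and>
     (\<forall>u\<in>C. \<forall>w. (u, w) \<in> H \<longrightarrow> w \<in> C)"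

definition extract_tangles :: "'v game \<Rightarrow> nat \<Rightarrow> 'v set \<Rightarrow> ('v \<rightharpoonup> 'v) \<Rightarrow> 'v tangle set" where
  "extract_tangles G \<alpha> Z \<sigma> =
     (let Y = greatest_closed G \<alpha> Z \<sigma>; H = extract_graph G \<alpha> Y \<sigma> in
       {(C, \<sigma> |` (C \<inter> Vp G \<alpha>)) | C. bottom_scc H Y C \<and> (\<exists>u\<in>C. \<exists>w\<in>C. (u, w) \<in> H)})"

text \<open>States of search: (T, dom r, Y). Only the domain of the region function matters for
  the control flow.\<close>
type_synonym 'v search_state = "'v tangle set \<times> 'v set \<times> 'v tangle set"

definition cur_subgame :: "'v game \<Rightarrow> 'v set \<Rightarrow> 'v game" where
  "cur_subgame G D = subgame G (verts G - D)"

definition cur_tangles :: "'v game \<Rightarrow> 'v tangle set \<Rightarrow> 'v set \<Rightarrow> 'v tangle set" where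
  "cur_tangles G T D = {t \<in> T. fst t \<subseteq> verts G - D}"

text \<open>Transitions of search that do not return. The inner-loop step requires that no
  extracted tangle has empty escape set in the full game (otherwise search returns).\<close>
inductive search_step :: "'v game \<Rightarrow> 'v search_state \<Rightarrow> 'v search_state \<Rightarrow> bool" for G where
  inner: "\<lbrakk>verts G - D \<noteq> {};
      p = prmax G (verts G - D);
      tattr (cur_subgame G D) (cur_tangles G T D) (p mod 2)
            ((verts G - D) \<inter> {v. pr G v = p}) (Z, \<sigma>);
      \<forall>t \<in> extract_tangles (cur_subgame G D) (p mod 2) Z \<sigma>. escapes G t \<noteq> {}\<rbrakk>
    \<Longrightarrow> search_step G (T, D, Y)
          (T, D \<union> Z, Y \<union> extract_tangles (cur_subgame G D) (p mod 2) Z \<sigma>)"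
| outer: "verts G - D = {} \<Longrightarrow> search_step G (T, D, Y) (T \<union> Y, {}, {})"

definition search_reachable :: "'v game \<Rightarrow> 'v tangle set \<Rightarrow> 'v search_state \<Rightarrow> bool" where
  "search_reachable G T0 s \<longleftrightarrow> (search_step G)\<^sup>*\<^sup>* (T0, {}, {}) s"

end

theory Submission
  imports Defs "HOL-Library.Infinite_Set"
begin

(* Each vertex of the attractor is ranked by the step at which it was added, and each step that
   attracts a tangle remembers that tangle. Outside the target, an edge allowed by the computed
   strategy never increases the rank, and keeps it only while moving inside the tangle attracted
   at that step. Hence a consistent play staying in the region either meets the target, whose
   vertices all have the top priority p, infinitely often, or eventually moves inside a single
   attracted tangle, all of whose cycles are won by alpha; either way alpha wins.
   That the tangles handed to the attractor really are tangles is an invariant of search: an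
   extracted bottom SCC is closed under the strategy, so each of its cycles is a consistent cycle
   in the region, won by alpha by the first part. *)

lemma Vp_subset_verts: "Vp H a \<subseteq> verts H"
  by (auto simp: Vp_def verts_def)

lemma Vp_opp_if_not_Vp:
  assumes "a < 2" "v \<in> verts H" "v \<notin> Vp H a"
  shows "v \<in> Vp H (opp a)"
  using assms by (auto simp: Vp_def verts_def opp_def)

lemma not_Vp_if_Vp_opp:
  assumes "a < 2" "V0 H \<inter> V1 H = {}" "v \<in> Vp H (opp a)"
  shows "v \<notin> Vp H a"
  using assms by (auto simp: Vp_def opp_def)

lemma subgame_simps:
  "verts (subgame G S) = verts G \<inter> S"
  "Vp (subgame G S) a = Vp G a \<inter> S"
  "E (subgame G S) = E G \<inter> (S \<times> S)"
  "pr (subgame G S) = pr G"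
  "V0 (subgame G S) = V0 G \<inter> S"
  "V1 (subgame G S) = V1 G \<inter> S"
  by (auto simp: subgame_def verts_def Vp_def)

lemma prmax_subgame: "prmax (subgame G S) U = prmax G U"
  by (simp add: prmax_def subgame_simps)

lemma tangle_graph_subgame:
  "U \<subseteq> S \<Longrightarrow> tangle_graph (subgame G S) U \<tau> = tangle_graph G U \<tau>"
  unfolding tangle_graph_def Let_def prmax_subgame subgame_simps by auto

lemma is_tangle_subgame:
  assumes "fst t \<subseteq> S"
  shows "is_tangle (subgame G S) t \<longleftrightarrow> is_tangle G t"
proof -
  obtain U \<tau> where t: "t = (U, \<tau>)" by (cases t)
  with assms have "U \<subseteq> S" by simp
  then have "U \<inter> X \<inter> S = U \<inter> X" "U \<subseteq> verts G \<inter> S \<longleftrightarrow> U \<subseteq> verts G"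
    "(\<forall>u \<in> U \<inter> X. \<exists>w. \<tau> u = Some w \<and> w \<in> U \<and> (u, w) \<in> E G \<inter> (S \<times> S)) \<longleftrightarrow>
     (\<forall>u \<in> U \<inter> X. \<exists>w. \<tau> u = Some w \<and> w \<in> U \<and> (u, w) \<in> E G)" for X
    by blast+
  then show ?thesis
    unfolding t is_tangle_def Let_def fst_conv snd_conv tangle_graph_subgame[OF \<open>U \<subseteq> S\<close>]
      prmax_subgame subgame_simps Int_assoc[symmetric]
    by (simp only:)
qed

section \<open>Priorities occurring infinitely often\<close>

lemma inf_prios_subset_range: "inf_prios H \<rho> \<subseteq> pr H ` range \<rho>"
  by (auto simp: inf_prios_def dest: INFM_EX)

lemma INFM_vertex_if_finite_range:
  assumes "finite (range \<rho>)" "\<exists>\<^sub>\<infinity>i. P (\<rho> i)"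
  obtains v where "P v" "\<exists>\<^sub>\<infinity>i. \<rho> i = v"
proof -
  have "\<exists>\<^sub>\<infinity>i. \<exists>v\<in>{v \<in> range \<rho>. P v}. \<rho> i = v"
    using assms(2) by (rule INFM_mono) blast
  then show ?thesis
    using assms(1) that by (subst (asm) INFM_finite_Bex_distrib) auto
qed

lemma finite_inf_prios: "finite (range \<rho>) \<Longrightarrow> finite (inf_prios H \<rho>)"
  by (metis finite_imageI finite_subset inf_prios_subset_range)

lemma Max_inf_prios_mem:
  assumes "finite (range \<rho>)"
  shows "Max (inf_prios H \<rho>) \<in> inf_prios H \<rho>"
proof -
  obtain v where "\<exists>\<^sub>\<infinity>i. \<rho> i = v"
    using INFM_vertex_if_finite_range[OF assms, of "\<lambda>_. True"] by auto
  then have "\<exists>\<^sub>\<infinity>i. pr H (\<rho> i) = pr H v"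
    by (rule INFM_mono) simp
  then have "pr H v \<in> inf_prios H \<rho>"
    by (simp add: inf_prios_def)
  then show ?thesis
    using finite_inf_prios[OF assms] by (intro Max_in) auto
qed

lemma eventually_prios_le_Max_inf_prios:
  assumes "finite (range \<rho>)"
  shows "\<forall>\<^sub>\<infinity>i. pr H (\<rho> i) \<le> Max (inf_prios H \<rho>)"
proof -
  let ?q = "Max (inf_prios H \<rho>)"
  have "\<forall>\<^sub>\<infinity>i. pr H (\<rho> i) \<noteq> q" if "?q < q" for q
  proof -
    have "q \<notin> inf_prios H \<rho>"
      using that finite_inf_prios[OF assms] Max_ge leD by blast
    then show ?thesis by (simp add: inf_prios_def)
  qed
  then have "\<forall>\<^sub>\<infinity>i. \<forall>q \<in> {q \<in> pr H ` range \<rho>. ?q < q}. pr H (\<rho> i) \<noteq> q"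
    using assms by (subst MOST_finite_Ball_distrib) auto
  then show ?thesis
    by (rule MOST_mono) (use leI in blast)
qed

lemma Max_inf_prios_eqI:
  assumes "finite (range \<rho>)" "\<forall>i. pr H (\<rho> i) \<le> p" "\<exists>\<^sub>\<infinity>i. pr H (\<rho> i) = p"
  shows "Max (inf_prios H \<rho>) = p"
  using assms inf_prios_subset_range[of H \<rho>]
  by (intro Max_eqI finite_inf_prios) (auto simp: inf_prios_def)

section \<open>Cycles, tangles and bottom SCCs\<close>

lemma map_is_cycle:
  assumes "i < j" "f j = f i" "\<forall>k \<in> {i..<j}. (f k, f (Suc k)) \<in> R"
  shows "is_cycle R (map f [i..<j])"
  unfolding is_cycle_def
proof (intro conjI allI impI)
  show "map f [i..<j] \<noteq> []" using assms(1) by simp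
  fix k assume "k < length (map f [i..<j])"
  then have k: "k < j - i" by simp
  have "map f [i..<j] ! (Suc k mod length (map f [i..<j])) = f (Suc (i + k))"
  proof (cases "Suc k < j - i")
    case False
    with k have "Suc k = j - i" by simp
    with assms(1) have "Suc k mod (j - i) = 0" "Suc (i + k) = j" by simp_all
    with assms(1,2) show ?thesis by simp
  qed simp
  with k assms(3) show "(map f [i..<j] ! k, map f [i..<j] ! (Suc k mod length (map f [i..<j]))) \<in> R"
    by simp
qed

lemma play_won_by_if_eventually_along:
  assumes fin: "finite (range \<rho>)" and walk: "\<forall>i\<ge>M. (\<rho> i, \<rho> (Suc i)) \<in> R"
    and cycles: "\<forall>xs. is_cycle R xs \<longrightarrow> Max (pr H ` set xs) mod 2 = a"
  shows "play_won_by H a \<rho>"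
proof -
  define q where "q = Max (inf_prios H \<rho>)"
  obtain N where N: "\<forall>i\<ge>N. pr H (\<rho> i) \<le> q"
    using eventually_prios_le_Max_inf_prios[OF fin] unfolding q_def MOST_nat_le by blast
  have "\<exists>\<^sub>\<infinity>i. pr H (\<rho> i) = q"
    using Max_inf_prios_mem[OF fin] unfolding q_def inf_prios_def by simp
  then obtain v where v: "pr H v = q" "\<exists>\<^sub>\<infinity>i. \<rho> i = v"
    by (rule INFM_vertex_if_finite_range[OF fin])
  then obtain i where i: "i \<ge> M + N" "\<rho> i = v"
    unfolding INFM_nat_le by blast
  obtain j where j: "j \<ge> Suc i" "\<rho> j = v"
    using v(2) unfolding INFM_nat_le by blast
  have "is_cycle R (map \<rho> [i..<j])"
    using i j walk by (intro map_is_cycle) auto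
  moreover have "Max (pr H ` set (map \<rho> [i..<j])) = q"
    using i j N v(1) by (intro Max_eqI) force+
  ultimately show ?thesis
    using cycles unfolding play_won_by_def q_def by metis
qed

lemma cycle_unrolling:
  assumes "is_cycle R xs"
  defines "\<rho> \<equiv> \<lambda>i. xs ! (i mod length xs)"
  shows "\<forall>i. (\<rho> i, \<rho> (Suc i)) \<in> R" "inf_prios H \<rho> = pr H ` set xs"
proof -
  have len: "length xs > 0" using assms(1) by (simp add: is_cycle_def)
  show "\<forall>i. (\<rho> i, \<rho> (Suc i)) \<in> R"
  proof
    fix i
    have "i mod length xs < length xs" using len by simp
    with assms(1) show "(\<rho> i, \<rho> (Suc i)) \<in> R"
      unfolding is_cycle_def \<rho>_def by (metis mod_Suc_eq)
  qed
  have "range \<rho> = set xs"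
  proof
    show "range \<rho> \<subseteq> set xs" using len by (auto simp: \<rho>_def)
    show "set xs \<subseteq> range \<rho>"
      unfolding \<rho>_def by (auto simp: in_set_conv_nth) (metis mod_less rangeI)
  qed
  have "q \<in> inf_prios H \<rho>" if q: "q \<in> pr H ` set xs" for q
  proof -
    obtain k where k: "k < length xs" "pr H (xs ! k) = q"
      using q by (auto simp: in_set_conv_nth)
    have "\<exists>\<^sub>\<infinity>i. pr H (\<rho> i) = q"
      unfolding INFM_nat_le
    proof
      fix m
      show "\<exists>n\<ge>m. pr H (\<rho> n) = q"
        using k len by (intro exI[of _ "k + m * length xs"]) (simp add: \<rho>_def trans_le_add2)
    qed
    then show ?thesis by (simp add: inf_prios_def)
  qed
  then show "inf_prios H \<rho> = pr H ` set xs"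
    using inf_prios_subset_range[of H \<rho>] \<open>range \<rho> = set xs\<close> by blast
qed

lemma bottom_scc_cycle:
  assumes C: "bottom_scc R Y C" and "(u, w) \<in> R" "u \<in> C" "c \<in> C"
  obtains xs where "is_cycle R xs" "c \<in> set xs" "set xs \<subseteq> C"
proof -
  have "(c, u) \<in> R\<^sup>*" "(w, c) \<in> R\<^sup>*" "w \<in> C"
    using assms unfolding bottom_scc_def by blast+
  with \<open>(u, w) \<in> R\<close> have "(c, c) \<in> R\<^sup>+"
    by (meson rtrancl_into_trancl1 trancl_rtrancl_trancl)
  then obtain m where m: "m > 0" "(c, c) \<in> R ^^ m"
    using trancl_power by blast
  then obtain f where f: "f 0 = c" "f m = c" "\<forall>i<m. (f i, f (Suc i)) \<in> R"
    using relpow_fun_conv by metis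
  have fC: "f i \<in> C" if "i \<le> m" for i
    using that
  proof (induction i)
    case (Suc i)
    with f(3) C show ?case unfolding bottom_scc_def by auto
  qed (use f(1) \<open>c \<in> C\<close> in simp)
  show thesis
  proof
    show "is_cycle R (map f [0..<m])"
      using m(1) f by (intro map_is_cycle) auto
    show "c \<in> set (map f [0..<m])" using m(1) f(1) by force
    show "set (map f [0..<m]) \<subseteq> C" using fC by auto
  qed
qed

lemma is_tangleD:
  assumes "is_tangle H (U, \<tau>)"
  shows "U \<subseteq> verts H"
    and "\<forall>u \<in> U \<inter> Vp H (prmax H U mod 2). \<exists>w. \<tau> u = Some w \<and> w \<in> U \<and> (u, w) \<in> E H"
    and "\<forall>xs. is_cycle (tangle_graph H U \<tau>) xs \<longrightarrow> Max (pr H ` set xs) mod 2 = prmax H U mod 2"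
  using assms unfolding is_tangle_def Let_def by auto

lemma closed_in_greatest_closed: "closed_in G \<alpha> \<sigma> (greatest_closed G \<alpha> Z \<sigma>)"
  unfolding closed_in_def greatest_closed_def by blast

lemma tangle_graph_bottom_scc:
  assumes C: "bottom_scc (extract_graph H a Y \<sigma>) Y C" and parity: "prmax H C mod 2 = a"
  shows "tangle_graph H C (\<sigma> |` (C \<inter> Vp H a)) = extract_graph H a Y \<sigma> \<inter> (C \<times> UNIV)"
proof -
  have "C \<subseteq> Y" and closed: "\<forall>u\<in>C. \<forall>w. (u, w) \<in> extract_graph H a Y \<sigma> \<longrightarrow> w \<in> C"
    using C unfolding bottom_scc_def by auto
  have "(x, y) \<in> tangle_graph H C (\<sigma> |` (C \<inter> Vp H a)) \<longleftrightarrow>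
        (x, y) \<in> extract_graph H a Y \<sigma> \<and> x \<in> C" for x y
  proof
    assume "(x, y) \<in> tangle_graph H C (\<sigma> |` (C \<inter> Vp H a))"
    then consider "x \<in> C \<inter> Vp H a" "\<sigma> x = Some y" | "(x, y) \<in> E H" "x \<in> C \<inter> Vp H (opp a)"
      unfolding tangle_graph_def Let_def parity by (auto split: if_splits)
    then show "(x, y) \<in> extract_graph H a Y \<sigma> \<and> x \<in> C"
      by cases (use \<open>C \<subseteq> Y\<close> in \<open>auto simp: extract_graph_def\<close>)
  next
    assume xy: "(x, y) \<in> extract_graph H a Y \<sigma> \<and> x \<in> C"
    with closed have "y \<in> C" by blast
    from xy consider "x \<in> C \<inter> Vp H a" "\<sigma> x = Some y" | "(x, y) \<in> E H" "x \<in> C \<inter> Vp H (opp a)"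
      unfolding extract_graph_def by blast
    then show "(x, y) \<in> tangle_graph H C (\<sigma> |` (C \<inter> Vp H a))"
      by cases (use \<open>y \<in> C\<close> in \<open>auto simp: tangle_graph_def Let_def parity\<close>)
  qed
  then show ?thesis by auto
qed

lemma rtrancl_within_closed:
  assumes "(u, w) \<in> R\<^sup>*" "u \<in> C" "\<forall>x\<in>C. \<forall>y. (x, y) \<in> R \<longrightarrow> y \<in> C"
  shows "(u, w) \<in> (R \<inter> (C \<times> UNIV))\<^sup>*"
proof -
  from assms(1) have "(u, w) \<in> (R \<inter> (C \<times> UNIV))\<^sup>* \<and> w \<in> C"
  proof (induction rule: rtrancl_induct)
    case (step y z)
    with assms(3) have "(y, z) \<in> R \<inter> (C \<times> UNIV)" "z \<in> C" by auto
    with step.IH show ?case by (meson rtrancl.rtrancl_into_rtrancl)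
  qed (simp add: assms(2))
  then show ?thesis ..
qed

lemma bottom_scc_own_successor:
  assumes "closed_in H a \<sigma> Y" "bottom_scc (extract_graph H a Y \<sigma>) Y C" "v \<in> C \<inter> Vp H a"
  shows "\<exists>w. \<sigma> v = Some w \<and> w \<in> C"
proof -
  have "C \<subseteq> Y" and closed: "\<forall>u\<in>C. \<forall>w. (u, w) \<in> extract_graph H a Y \<sigma> \<longrightarrow> w \<in> C"
    using assms(2) unfolding bottom_scc_def by auto
  with assms(1,3) obtain w where "\<sigma> v = Some w"
    unfolding closed_in_def by blast
  moreover from this assms(3) \<open>C \<subseteq> Y\<close> have "(v, w) \<in> extract_graph H a Y \<sigma>"
    unfolding extract_graph_def by blast
  ultimately show ?thesis
    using closed assms(3) by blast
qed

lemma bottom_scc_tangle_graph_connected: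
  assumes C: "bottom_scc (extract_graph H a Y \<sigma>) Y C" and "prmax H C mod 2 = a"
  shows "\<forall>u\<in>C. \<forall>w\<in>C. (u, w) \<in> (tangle_graph H C (\<sigma> |` (C \<inter> Vp H a)))\<^sup>*"
  using C unfolding tangle_graph_bottom_scc[OF assms] bottom_scc_def
  by (auto intro: rtrancl_within_closed)

section \<open>The ranking invariant of the tangle attractor\<close>

lemma nat_seq_eventually_const:
  fixes r :: "nat \<Rightarrow> nat"
  assumes "\<forall>i\<ge>N. r (Suc i) \<le> r i"
  obtains M where "M \<ge> N" "\<forall>i\<ge>M. r i = r M"
proof -
  define m where "m = (LEAST x. \<exists>i\<ge>N. r i = x)"
  obtain M where M: "M \<ge> N" "r M = m"
    using LeastI_ex[of "\<lambda>x. \<exists>i\<ge>N. r i = x"] unfolding m_def by blast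
  have "r i \<le> r M" if "i \<ge> M" for i
    using that
  proof (induction i rule: dec_induct)
    case (step j)
    with assms M(1) show ?case by (meson le_trans)
  qed simp
  moreover have "m \<le> r i" if "i \<ge> N" for i
    unfolding m_def using that by (blast intro: Least_le)
  ultimately show thesis
    using M by (intro that[of M]) (auto intro: le_antisym)
qed

definition strategy_edges :: "'v game \<Rightarrow> 'v set \<Rightarrow> ('v \<rightharpoonup> 'v) \<Rightarrow> ('v \<times> 'v) set" where
  "strategy_edges H Z \<sigma> = {(v, w). (v, w) \<in> E H \<and> v \<in> Z \<and> (\<forall>x. \<sigma> v = Some x \<longrightarrow> w = x)}"

lemma consistent_play_strategy_edges:
  assumes "is_play H \<rho>" "consistent \<sigma> \<rho>" "\<forall>i. \<rho> i \<in> Z"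
  shows "(\<rho> i, \<rho> (Suc i)) \<in> strategy_edges H Z \<sigma>"
  using assms by (simp add: is_play_def consistent_def strategy_edges_def)

text \<open>In \<open>descends\<close> and \<open>attractor_inv\<close>, \<open>rk v\<close> is the step at which \<open>v\<close> entered the
  attractor (irrelevant on the target \<open>A\<close>) and \<open>tg k\<close> is the tangle attracted at step \<open>k\<close>.\<close>

definition descends ::
  "'v game \<Rightarrow> 'v tangle set \<Rightarrow> nat \<Rightarrow> 'v set \<Rightarrow> 'v set \<Rightarrow> ('v \<Rightarrow> nat) \<Rightarrow> (nat \<Rightarrow> 'v tangle)
    \<Rightarrow> 'v \<Rightarrow> 'v \<Rightarrow> bool" where
  "descends H T a A Z rk tg v w \<longleftrightarrow> w \<in> Z \<and> (w \<in> A \<or> rk w < rk v \<or>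
     (rk w = rk v \<and> tg (rk v) \<in> T \<and> prmax H (fst (tg (rk v))) mod 2 = a \<and>
      (v, w) \<in> tangle_graph H (fst (tg (rk v))) (snd (tg (rk v)))))"

definition attractor_inv ::
  "'v game \<Rightarrow> 'v tangle set \<Rightarrow> nat \<Rightarrow> 'v set \<Rightarrow> 'v set \<Rightarrow> ('v \<rightharpoonup> 'v) \<Rightarrow> ('v \<Rightarrow> nat)
    \<Rightarrow> (nat \<Rightarrow> 'v tangle) \<Rightarrow> nat \<Rightarrow> bool" where
  "attractor_inv H T a A Z \<sigma> rk tg n \<longleftrightarrow>
     A \<subseteq> Z \<and> Z \<subseteq> verts H \<and> dom \<sigma> \<subseteq> Z \<inter> Vp H a \<and> (Z - A) \<inter> Vp H a \<subseteq> dom \<sigma> \<and>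
     (\<forall>v w. \<sigma> v = Some w \<longrightarrow> (v, w) \<in> E H \<and> w \<in> Z) \<and>
     (\<forall>v \<in> Z - A. rk v < n) \<and>
     (\<forall>(v, w) \<in> strategy_edges H Z \<sigma>. v \<notin> A \<longrightarrow> descends H T a A Z rk tg v w)"

lemma attractor_inv_descends:
  "attractor_inv H T a A Z \<sigma> rk tg n \<Longrightarrow> (v, w) \<in> strategy_edges H Z \<sigma> \<Longrightarrow> v \<notin> A
    \<Longrightarrow> descends H T a A Z rk tg v w"
  unfolding attractor_inv_def by blast

lemma descends_new_into_old:
  assumes "w \<in> Z" "v \<notin> Z" "\<forall>u \<in> Z - A. rk u < n" "Z \<subseteq> Z'"
  shows "descends H T a A Z' (\<lambda>x. if x \<in> Z then rk x else n) tg v w"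
  using assms by (cases "w \<in> A") (auto simp: descends_def)

lemma descends_from_old:
  assumes inv: "attractor_inv H T a A Z \<sigma> rk tg n"
    and "(v, w) \<in> strategy_edges H Z' \<sigma>'" "v \<in> Z - A" "\<sigma>' v = \<sigma> v" "Z \<subseteq> Z'"
    and "\<forall>k<n. tg' k = tg k"
  shows "descends H T a A Z' (\<lambda>x. if x \<in> Z then rk x else n) tg' v w"
proof -
  have "(v, w) \<in> strategy_edges H Z \<sigma>"
    using assms(2-4) by (simp add: strategy_edges_def)
  with inv assms(3) have "descends H T a A Z rk tg v w" "rk v < n"
    by (auto intro: attractor_inv_descends simp: attractor_inv_def)
  with assms(3,5,6) show ?thesis
    unfolding descends_def by auto
qed

lemma play_eventually_in_attracted_tangle:
  assumes inv: "attractor_inv H T a A Z \<sigma> rk tg n"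
    and play: "\<forall>i. (\<rho> i, \<rho> (Suc i)) \<in> strategy_edges H Z \<sigma>" and N: "\<forall>i\<ge>N. \<rho> i \<notin> A"
  obtains t M where "t \<in> T" "prmax H (fst t) mod 2 = a"
    "\<forall>i\<ge>M. (\<rho> i, \<rho> (Suc i)) \<in> tangle_graph H (fst t) (snd t)"
proof -
  have desc: "descends H T a A Z rk tg (\<rho> i) (\<rho> (Suc i))" if "i \<ge> N" for i
    using attractor_inv_descends[OF inv play[rule_format]] N that by blast
  have "\<forall>i\<ge>N. rk (\<rho> (Suc i)) \<le> rk (\<rho> i)"
  proof (intro allI impI)
    fix i assume "i \<ge> N"
    with N have "\<rho> (Suc i) \<notin> A" by simp
    with desc[OF \<open>i \<ge> N\<close>] show "rk (\<rho> (Suc i)) \<le> rk (\<rho> i)"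
      unfolding descends_def by auto
  qed
  then obtain M where M: "M \<ge> N" "\<forall>i\<ge>M. rk (\<rho> i) = rk (\<rho> M)"
    by (rule nat_seq_eventually_const)
  define t where "t = tg (rk (\<rho> M))"
  have "t \<in> T \<and> prmax H (fst t) mod 2 = a \<and> (\<rho> i, \<rho> (Suc i)) \<in> tangle_graph H (fst t) (snd t)"
    if "i \<ge> M" for i
  proof -
    have "\<rho> (Suc i) \<notin> A"
      using N M(1) that by simp
    moreover have "rk (\<rho> (Suc i)) = rk (\<rho> i)" "rk (\<rho> i) = rk (\<rho> M)"
      using M(2) that le_SucI by metis+
    ultimately show ?thesis
      using desc[of i] M(1) that unfolding t_def descends_def by auto
  qed
  then show thesis
    using that[of t M] by blast
qed

locale tattr_setting =
  fixes H :: "'v game" and T :: "'v tangle set" and a :: nat and A :: "'v set" and p :: nat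
  assumes finite_verts: "finite (verts H)"
    and players_disjoint: "V0 H \<inter> V1 H = {}"
    and tangles: "\<forall>t\<in>T. is_tangle H t"
    and target_verts: "A \<subseteq> verts H"
    and target_prio: "\<forall>v\<in>A. pr H v = p"
    and prio_le: "\<forall>v\<in>verts H. pr H v \<le> p"
    and parity: "p mod 2 = a"
begin

lemma player_lt_2: "a < 2"
  using parity by auto

lemma attractor_inv_init: "attractor_inv H T a A A Map.empty rk tg 0"
  using target_verts by (simp add: attractor_inv_def strategy_edges_def)

lemma attractor_inv_own:
  assumes inv: "attractor_inv H T a A Z \<sigma> rk tg n"
    and v: "v \<in> Vp H a" "v \<notin> Z" "w \<in> Z" "(v, w) \<in> E H"
  shows "attractor_inv H T a A (Z \<union> {v}) (\<sigma>(v \<mapsto> w)) (\<lambda>x. if x \<in> Z then rk x else n) tg (Suc n)"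
proof -
  have ranks: "\<forall>u \<in> Z - A. rk u < n"
    using inv by (simp add: attractor_inv_def)
  have "descends H T a A (Z \<union> {v}) (\<lambda>x. if x \<in> Z then rk x else n) tg x y"
    if xy: "(x, y) \<in> strategy_edges H (Z \<union> {v}) (\<sigma>(v \<mapsto> w))" "x \<notin> A" for x y
  proof (cases "x = v")
    case True
    with xy have "y = w" by (simp add: strategy_edges_def)
    with True v ranks show ?thesis by (intro descends_new_into_old) auto
  next
    case False
    with xy show ?thesis
      by (intro descends_from_old[OF inv xy(1)]) (auto simp: strategy_edges_def)
  qed
  moreover have "v \<in> verts H"
    using v(1) Vp_subset_verts[of H a] by blast
  ultimately show ?thesis
    using inv v unfolding attractor_inv_def by (auto simp: less_Suc_eq)
qed

lemma attractor_inv_opp: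
  assumes inv: "attractor_inv H T a A Z \<sigma> rk tg n"
    and v: "v \<in> Vp H (opp a)" "v \<notin> Z" "{w. (v, w) \<in> E H} \<subseteq> Z"
  shows "attractor_inv H T a A (Z \<union> {v}) \<sigma> (\<lambda>x. if x \<in> Z then rk x else n) tg (Suc n)"
proof -
  have ranks: "\<forall>u \<in> Z - A. rk u < n"
    using inv by (simp add: attractor_inv_def)
  have "descends H T a A (Z \<union> {v}) (\<lambda>x. if x \<in> Z then rk x else n) tg x y"
    if xy: "(x, y) \<in> strategy_edges H (Z \<union> {v}) \<sigma>" "x \<notin> A" for x y
  proof (cases "x = v")
    case True
    with xy v have "y \<in> Z" by (auto simp: strategy_edges_def)
    with True v ranks show ?thesis by (intro descends_new_into_old) auto
  next
    case False
    with xy show ?thesis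
      by (intro descends_from_old[OF inv xy(1)]) (auto simp: strategy_edges_def)
  qed
  moreover have "v \<in> verts H" "v \<notin> Vp H a"
    using v(1) Vp_subset_verts[of H "opp a"] not_Vp_if_Vp_opp[OF player_lt_2 players_disjoint]
    by blast+
  ultimately show ?thesis
    using inv v unfolding attractor_inv_def by (auto simp: less_Suc_eq)
qed

lemma attractor_inv_target:
  assumes inv: "attractor_inv H T a A Z \<sigma> rk tg n"
    and v: "v \<in> A \<inter> Vp H a" "w \<in> Z" "(v, w) \<in> E H"
  shows "attractor_inv H T a A Z (\<sigma>(v \<mapsto> w)) rk tg n"
proof -
  have "strategy_edges H Z (\<sigma>(v \<mapsto> w)) \<subseteq> strategy_edges H Z \<sigma> \<union> {v} \<times> UNIV"
    by (auto simp: strategy_edges_def)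
  with inv v show ?thesis
    unfolding attractor_inv_def by auto
qed

lemma tangle_edge_or_escape:
  assumes t: "(U, \<tau>) \<in> T" "prmax H U mod 2 = a"
    and x: "x \<in> U" "(x, y) \<in> E H" "x \<in> Vp H a \<Longrightarrow> \<tau> x = Some y"
  shows "y \<in> escapes H (U, \<tau>) \<or> y \<in> U \<and> (x, y) \<in> tangle_graph H U \<tau>"
proof (cases "x \<in> Vp H a")
  case True
  obtain w where "\<tau> x = Some w" "w \<in> U"
    using is_tangleD(2)[of H U \<tau>] tangles t True x(1) by force
  with True x t(2) show ?thesis
    by (simp add: tangle_graph_def)
next
  case False
  have "x \<in> Vp H (opp a)"
    using is_tangleD(1)[of H U \<tau>] tangles t(1) x(1)
    by (intro Vp_opp_if_not_Vp[OF player_lt_2 _ False]) blast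
  with x(1,2) t(2) show ?thesis
    by (auto simp: escapes_def tangle_graph_def)
qed

lemma attractor_inv_tangle:
  assumes inv: "attractor_inv H T a A Z \<sigma> rk tg n"
    and t: "(U, \<tau>) \<in> T" "prmax H U mod 2 = a" "escapes H (U, \<tau>) \<subseteq> Z"
  defines "\<sigma>' \<equiv> \<lambda>u. if u \<in> U \<inter> Vp H a \<and> \<sigma> u = None then \<tau> u else \<sigma> u"
  shows "attractor_inv H T a A (Z \<union> U) \<sigma>' (\<lambda>x. if x \<in> Z then rk x else n) (tg(n := (U, \<tau>))) (Suc n)"
proof -
  have U: "U \<subseteq> verts H" "\<forall>u \<in> U \<inter> Vp H a. \<exists>w. \<tau> u = Some w \<and> w \<in> U \<and> (u, w) \<in> E H"
    using is_tangleD[of H U \<tau>] tangles t(1,2) by blast+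
  have ranks: "\<forall>u \<in> Z - A. rk u < n" and dom: "dom \<sigma> \<subseteq> Z \<inter> Vp H a" "(Z - A) \<inter> Vp H a \<subseteq> dom \<sigma>"
    using inv by (simp_all add: attractor_inv_def)
  have "descends H T a A (Z \<union> U) (\<lambda>x. if x \<in> Z then rk x else n) (tg(n := (U, \<tau>))) x y"
    if xy: "(x, y) \<in> strategy_edges H (Z \<union> U) \<sigma>'" "x \<notin> A" for x y
  proof (cases "x \<in> Z")
    case True
    with xy dom show ?thesis
      by (intro descends_from_old[OF inv xy(1)]) (auto simp: \<sigma>'_def strategy_edges_def)
  next
    case False
    with xy dom have x: "x \<in> U" "\<sigma> x = None" "(x, y) \<in> E H" by (auto simp: strategy_edges_def)
    moreover have "\<tau> x = Some y" if own: "x \<in> Vp H a"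
    proof -
      obtain w where "\<tau> x = Some w" using U(2) x(1) own by blast
      with xy(1) x own show ?thesis by (simp add: strategy_edges_def \<sigma>'_def)
    qed
    ultimately have "y \<in> escapes H (U, \<tau>) \<or> y \<in> U \<and> (x, y) \<in> tangle_graph H U \<tau>"
      using tangle_edge_or_escape[OF t(1,2)] by blast
    show ?thesis
    proof (cases "y \<in> Z")
      case True
      with \<open>x \<notin> Z\<close> ranks show ?thesis
        by (intro descends_new_into_old) auto
    next
      case False
      with \<open>x \<notin> Z\<close> t \<open>y \<in> escapes H (U, \<tau>) \<or> y \<in> U \<and> (x, y) \<in> tangle_graph H U \<tau>\<close>
      show ?thesis
        by (auto simp: descends_def)
    qed
  qed
  moreover have "dom \<sigma>' \<subseteq> (Z \<union> U) \<inter> Vp H a"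
    using dom(1) by (auto simp: \<sigma>'_def dom_def split: if_splits)
  moreover have "(Z \<union> U - A) \<inter> Vp H a \<subseteq> dom \<sigma>'"
    using dom(2) U(2) by (fastforce simp: \<sigma>'_def)
  moreover have "(v, w) \<in> E H \<and> w \<in> Z \<union> U" if "\<sigma>' v = Some w" for v w
  proof (cases "v \<in> U \<inter> Vp H a \<and> \<sigma> v = None")
    case True
    with that U(2) show ?thesis by (force simp: \<sigma>'_def)
  next
    case False
    with that inv show ?thesis by (auto simp: \<sigma>'_def attractor_inv_def)
  qed
  ultimately show ?thesis
    using inv U(1) unfolding attractor_inv_def by (auto simp: less_Suc_eq)
qed

lemma attractor_inv_reachable:
  assumes "(tattr_step H T a A)\<^sup>*\<^sup>* (A, Map.empty) (Z, \<sigma>)"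
  obtains rk tg n where "attractor_inv H T a A Z \<sigma> rk tg n"
proof -
  have "\<exists>rk tg n. attractor_inv H T a A (fst s) (snd s) rk tg n"
    if "(tattr_step H T a A)\<^sup>*\<^sup>* (A, Map.empty) s" for s
    using that
  proof (induction rule: rtranclp_induct)
    case base
    show ?case using attractor_inv_init by fastforce
  next
    case (step s s')
    then obtain rk tg n where inv: "attractor_inv H T a A (fst s) (snd s) rk tg n" by blast
    from step.hyps(2) show ?case
    proof cases
      case (attr_own v Z w \<sigma>)
      then have "attractor_inv H T a A (fst s') (snd s')
          (\<lambda>x. if x \<in> Z then rk x else n) tg (Suc n)"
        using inv attractor_inv_own[of Z \<sigma> rk tg n v w] by simp
      then show ?thesis by blast
    next
      case (attr_opp v Z \<sigma>)
      then have "attractor_inv H T a A (fst s') (snd s')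
          (\<lambda>x. if x \<in> Z then rk x else n) tg (Suc n)"
        using inv attractor_inv_opp[of Z \<sigma> rk tg n v] by simp
      then show ?thesis by blast
    next
      case (attr_tangle U \<tau> Z \<sigma>)
      then have "attractor_inv H T a A (fst s') (snd s')
          (\<lambda>x. if x \<in> Z then rk x else n) (tg(n := (U, \<tau>))) (Suc n)"
        using inv attractor_inv_tangle[of Z \<sigma> rk tg n U \<tau>] by simp
      then show ?thesis by blast
    next
      case (attr_target v \<sigma> w Z)
      then have "attractor_inv H T a A (fst s') (snd s') rk tg n"
        using inv attractor_inv_target[of Z \<sigma> rk tg n v w] by simp
      then show ?thesis by blast
    qed
  qed
  with assms that show thesis by fastforce
qed

theorem tattr_play_won:
  assumes reach: "(tattr_step H T a A)\<^sup>*\<^sup>* (A, Map.empty) (Z, \<sigma>)"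
    and play: "\<forall>i. (\<rho> i, \<rho> (Suc i)) \<in> strategy_edges H Z \<sigma>"
  shows "play_won_by H a \<rho>"
proof -
  obtain rk tg n where inv: "attractor_inv H T a A Z \<sigma> rk tg n"
    using attractor_inv_reachable[OF reach] .
  have "range \<rho> \<subseteq> verts H"
    using play inv by (auto simp: strategy_edges_def attractor_inv_def)
  then have fin: "finite (range \<rho>)"
    using finite_verts finite_subset by blast
  show ?thesis
  proof (cases "\<exists>\<^sub>\<infinity>i. \<rho> i \<in> A")
    case True
    then have "\<exists>\<^sub>\<infinity>i. pr H (\<rho> i) = p"
      by (rule INFM_mono) (use target_prio in blast)
    with fin \<open>range \<rho> \<subseteq> verts H\<close> prio_le have "Max (inf_prios H \<rho>) = p"
      by (intro Max_inf_prios_eqI) auto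
    with parity show ?thesis by (simp add: play_won_by_def)
  next
    case False
    then obtain N where "\<forall>i\<ge>N. \<rho> i \<notin> A"
      unfolding not_INFM MOST_nat_le by blast
    with inv play obtain t M where t: "t \<in> T" "prmax H (fst t) mod 2 = a"
      and along: "\<forall>i\<ge>M. (\<rho> i, \<rho> (Suc i)) \<in> tangle_graph H (fst t) (snd t)"
      by (rule play_eventually_in_attracted_tangle)
    have "\<forall>xs. is_cycle (tangle_graph H (fst t) (snd t)) xs \<longrightarrow> Max (pr H ` set xs) mod 2 = a"
      using is_tangleD(3)[of H "fst t" "snd t"] tangles t by simp
    with fin along show ?thesis
      by (rule play_won_by_if_eventually_along)
  qed
qed

corollary tattr_cycle_won:
  assumes reach: "(tattr_step H T a A)\<^sup>*\<^sup>* (A, Map.empty) (Z, \<sigma>)"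
    and "is_cycle R xs" "R \<subseteq> strategy_edges H Z \<sigma>"
  shows "Max (pr H ` set xs) mod 2 = a"
proof -
  define \<rho> where "\<rho> = (\<lambda>i. xs ! (i mod length xs))"
  have "\<forall>i. (\<rho> i, \<rho> (Suc i)) \<in> R" "inf_prios H \<rho> = pr H ` set xs"
    using cycle_unrolling[OF assms(2)] unfolding \<rho>_def by auto
  with tattr_play_won[OF reach, of \<rho>] assms(3) show ?thesis
    unfolding play_won_by_def by auto
qed

lemma extract_graph_subset_strategy_edges:
  assumes inv: "attractor_inv H T a A Z \<sigma> rk tg n" and "Y \<subseteq> Z"
  shows "extract_graph H a Y \<sigma> \<subseteq> strategy_edges H Z \<sigma>"
proof
  fix e assume e: "e \<in> extract_graph H a Y \<sigma>"
  have \<sigma>: "dom \<sigma> \<subseteq> Vp H a" "\<forall>v w. \<sigma> v = Some w \<longrightarrow> (v, w) \<in> E H"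
    using inv unfolding attractor_inv_def by auto
  have "\<sigma> v = None" if "v \<in> Vp H (opp a)" for v
    using \<sigma>(1) not_Vp_if_Vp_opp[OF player_lt_2 players_disjoint that] by blast
  with e \<sigma>(2) \<open>Y \<subseteq> Z\<close> show "e \<in> strategy_edges H Z \<sigma>"
    unfolding extract_graph_def strategy_edges_def by auto
qed

lemma bottom_scc_prmax_parity:
  assumes reach: "(tattr_step H T a A)\<^sup>*\<^sup>* (A, Map.empty) (Z, \<sigma>)"
    and C: "bottom_scc R Y C" "finite C" and R: "R \<subseteq> strategy_edges H Z \<sigma>"
    and "(u, w) \<in> R" "u \<in> C"
  shows "prmax H C mod 2 = a"
proof -
  have "C \<noteq> {}" using C(1) by (simp add: bottom_scc_def)
  with C(2) have "Max (pr H ` C) \<in> pr H ` C"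
    by (intro Max_in) auto
  then obtain c where c: "c \<in> C" "pr H c = prmax H C"
    unfolding prmax_def by auto
  obtain xs where xs: "is_cycle R xs" "c \<in> set xs" "set xs \<subseteq> C"
    using bottom_scc_cycle[OF C(1) \<open>(u, w) \<in> R\<close> \<open>u \<in> C\<close> c(1)] .
  have "Max (pr H ` set xs) = pr H c"
  proof (rule Max_eqI)
    show "y \<le> pr H c" if "y \<in> pr H ` set xs" for y
      using that xs(3) c(2) C(2) unfolding prmax_def by (auto intro: Max_ge)
    show "pr H c \<in> pr H ` set xs" using xs(2) by blast
  qed simp
  with tattr_cycle_won[OF reach xs(1) R] c(2) show ?thesis by simp
qed

theorem extract_tangles_is_tangle:
  assumes reach: "(tattr_step H T a A)\<^sup>*\<^sup>* (A, Map.empty) (Z, \<sigma>)"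
    and t: "t \<in> extract_tangles H a Z \<sigma>"
  shows "is_tangle H t"
proof -
  obtain rk tg n where inv: "attractor_inv H T a A Z \<sigma> rk tg n"
    using attractor_inv_reachable[OF reach] .
  define Y where "Y = greatest_closed H a Z \<sigma>"
  define EG where "EG = extract_graph H a Y \<sigma>"
  define \<sigma>' where "\<sigma>' C = \<sigma> |` (C \<inter> Vp H a)" for C
  obtain C u w where t_eq: "t = (C, \<sigma>' C)" and C: "bottom_scc EG Y C"
    and edge: "(u, w) \<in> EG" "u \<in> C"
    using t unfolding extract_tangles_def Y_def[symmetric] EG_def[symmetric] \<sigma>'_def Let_def
    by blast
  have "Y \<subseteq> Z"
    unfolding Y_def greatest_closed_def by blast
  have "C \<subseteq> Y" "C \<noteq> {}"
    using C unfolding bottom_scc_def by auto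
  have EG_sub: "EG \<subseteq> strategy_edges H Z \<sigma>"
    unfolding EG_def by (rule extract_graph_subset_strategy_edges[OF inv \<open>Y \<subseteq> Z\<close>])
  have "C \<subseteq> verts H"
    using inv \<open>C \<subseteq> Y\<close> \<open>Y \<subseteq> Z\<close> unfolding attractor_inv_def by blast
  then have "finite C"
    using finite_verts finite_subset by blast
  have parity_C: "prmax H C mod 2 = a"
    using bottom_scc_prmax_parity[OF reach C \<open>finite C\<close> EG_sub edge] .
  have R: "tangle_graph H C (\<sigma>' C) = EG \<inter> (C \<times> UNIV)"
    using C parity_C unfolding EG_def \<sigma>'_def by (rule tangle_graph_bottom_scc)
  have own: "\<exists>w. \<sigma>' C v = Some w \<and> w \<in> C \<and> (v, w) \<in> E H" if "v \<in> C \<inter> Vp H a" for v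
    using bottom_scc_own_successor[OF closed_in_greatest_closed C[unfolded EG_def Y_def] that]
      inv that unfolding \<sigma>'_def attractor_inv_def Y_def by auto
  then have "dom (\<sigma>' C) = C \<inter> Vp H a"
    unfolding \<sigma>'_def by auto
  moreover have "\<forall>u\<in>C. \<forall>w\<in>C. (u, w) \<in> (tangle_graph H C (\<sigma>' C))\<^sup>*"
    using bottom_scc_tangle_graph_connected C parity_C unfolding EG_def \<sigma>'_def by blast
  moreover have "\<forall>xs. is_cycle (tangle_graph H C (\<sigma>' C)) xs \<longrightarrow> Max (pr H ` set xs) mod 2 = a"
    using tattr_cycle_won[OF reach] EG_sub unfolding R by (meson Int_lower1 subset_trans)
  ultimately show ?thesis
    using own \<open>C \<subseteq> verts H\<close> \<open>C \<noteq> {}\<close>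
    unfolding t_eq is_tangle_def Let_def fst_conv snd_conv parity_C
    by blast
qed

end

section \<open>Executions of search\<close>

lemma tattr_setting_cur_subgame:
  assumes wf: "wf_game G" and T: "\<forall>t\<in>T. is_tangle G t" and p: "p = prmax G (verts G - D)"
  shows "tattr_setting (cur_subgame G D) (cur_tangles G T D) (p mod 2)
           ((verts G - D) \<inter> {v. pr G v = p}) p"
proof
  have fin: "finite (verts G)" and "V0 G \<inter> V1 G = {}"
    using wf by (auto simp: wf_game_def)
  have verts: "verts (cur_subgame G D) = verts G - D"
    by (auto simp: cur_subgame_def subgame_simps)
  show "finite (verts (cur_subgame G D))"
    using fin verts by simp
  show "V0 (cur_subgame G D) \<inter> V1 (cur_subgame G D) = {}"
    using \<open>V0 G \<inter> V1 G = {}\<close> by (auto simp: cur_subgame_def subgame_simps)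
  show "\<forall>t\<in>cur_tangles G T D. is_tangle (cur_subgame G D) t"
    using T is_tangle_subgame unfolding cur_tangles_def cur_subgame_def by blast
  show "(verts G - D) \<inter> {v. pr G v = p} \<subseteq> verts (cur_subgame G D)"
    using verts by blast
  show "\<forall>v\<in>(verts G - D) \<inter> {v. pr G v = p}. pr (cur_subgame G D) v = p"
    by (simp add: cur_subgame_def subgame_simps)
  show "\<forall>v\<in>verts (cur_subgame G D). pr (cur_subgame G D) v \<le> p"
    using fin unfolding verts p prmax_def by (simp add: cur_subgame_def subgame_simps)
qed simp

lemma search_reachable_tangles:
  assumes wf: "wf_game G" and T0: "\<forall>t \<in> T0. is_tangle G t"
    and "search_reachable G T0 (T, D, Y)"
  shows "\<forall>t \<in> T \<union> Y. is_tangle G t"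
proof -
  have "\<forall>t \<in> fst s \<union> snd (snd s). is_tangle G t" if "(search_step G)\<^sup>*\<^sup>* (T0, {}, {}) s" for s
    using that
  proof (induction rule: rtranclp_induct)
    case base
    then show ?case using T0 by simp
  next
    case (step s s')
    from step.hyps(2) show ?case
    proof cases
      case (inner D p T Z \<sigma> Y)
      then have T: "\<forall>t\<in>T. is_tangle G t" using step.IH by simp
      interpret tattr_setting "cur_subgame G D" "cur_tangles G T D" "p mod 2"
          "(verts G - D) \<inter> {v. pr G v = p}" p
        by (rule tattr_setting_cur_subgame[OF wf T \<open>p = prmax G (verts G - D)\<close>])
      have "is_tangle G t" if "t \<in> extract_tangles (cur_subgame G D) (p mod 2) Z \<sigma>" for t
      proof -
        have "is_tangle (cur_subgame G D) t"
          using extract_tangles_is_tangle[OF _ that] inner(5) unfolding tattr_def by blast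
        moreover from this have "fst t \<subseteq> verts G - D"
          unfolding is_tangle_def Let_def cur_subgame_def subgame_simps by blast
        ultimately show ?thesis
          using is_tangle_subgame unfolding cur_subgame_def by blast
      qed
      with step.IH inner(1,2) show ?thesis by auto
    next
      case outer
      with step.IH show ?thesis by auto
    qed
  qed
  with assms(3) show ?thesis
    unfolding search_reachable_def by fastforce
qed

theorem lemma2:
  fixes G :: "'v game" and T0 T Y :: "'v tangle set" and D Z :: "'v set"
    and \<sigma> :: "'v \<rightharpoonup> 'v" and \<rho> :: "nat \<Rightarrow> 'v" and p :: nat
  assumes "wf_game G"
    and "\<forall>t \<in> T0. is_tangle G t"
    and "search_reachable G T0 (T, D, Y)"
    and "verts G - D \<noteq> {}"
    and "p = prmax G (verts G - D)"
    and "tattr (cur_subgame G D) (cur_tangles G T D) (p mod 2)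
           ((verts G - D) \<inter> {v. pr G v = p}) (Z, \<sigma>)"
    and "is_play (cur_subgame G D) \<rho>"
    and "consistent \<sigma> \<rho>"
    and "\<forall>i. \<rho> i \<in> Z"
  shows "play_won_by (cur_subgame G D) (p mod 2) \<rho>"
proof -
  have "\<forall>t\<in>T. is_tangle G t"
    using search_reachable_tangles[OF assms(1-3)] by blast
  then interpret tattr_setting "cur_subgame G D" "cur_tangles G T D" "p mod 2"
      "(verts G - D) \<inter> {v. pr G v = p}" p
    by (rule tattr_setting_cur_subgame[OF assms(1) _ assms(5)])
  show ?thesis
  proof (rule tattr_play_won)
    show "(tattr_step (cur_subgame G D) (cur_tangles G T D) (p mod 2)
        ((verts G - D) \<inter> {v. pr G v = p}))\<^sup>*\<^sup>* ((verts G - D) \<inter> {v. pr G v = p}, Map.empty) (Z, \<sigma>)"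
      using assms(6) unfolding tattr_def by blast
    show "\<forall>i. (\<rho> i, \<rho> (Suc i)) \<in> strategy_edges (cur_subgame G D) Z \<sigma>"
      using consistent_play_strategy_edges[OF assms(7-9)] by blast
  qed
qed

end
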